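(* Let $k>24$ be an integer. Then for every finite point set $\mathcal{P}\subset\mathbb{R}^2$, the trapezoidal Yao graph $\mathsf{TY}_k(\mathcal{P})$ is a geometric $\tau_k$-spanner, where $$\tau_k=\left(1-2\sin\Big(\frac{\pi}{k}+\frac{\pi}{8}\Big)\right)^{-1}.$$
   Context: For $\theta\in[\pi/4,\pi/3)$ the curved trapezoid is the open set $\mathcal{T}_\theta=\{(x,y)\mid 0<x<1,\ 0<y<\sin\theta,\ x^2+y^2<1,\ (x-1)^2+y^2<1\}$; its critical arc is the closed arc $\{(\cos\phi,\sin\phi)\mid 0\le\phi\le\theta\}$ of its boundary (the boundary arc not incident to the origin). For a set $\mathcal{O}$: $\mathcal{O}^-$ is its reflection through the $x$-axis; $\mathrm{Rot}_{\gamma}(\mathcal{O})$ its counterclockwise rotation by $\gamma$ about the origin; $\lambda\mathcal{O}$ its dilation by factor $\lambda$ about the origin; $u+\mathcal{O}$ its translate by $u$ (these operations are applied to the critical arc as well). Trapezoidal Yao graph $\mathsf{TY}_k(\mathcal{P})$: let $\theta=\lceil k/8\rceil\cdot 2\pi/k$. For each $u\in\mathcal{P}$ and $j=0,\dots,k-1$ let $\Gamma_{j1}=\mathrm{Rot}_{2j\pi/k}(\mathcal{T}_\theta)$ and $\Gamma_{j2}=\mathrm{Rot}_{2j\pi/k}(\mathcal{T}_\theta^-)$. For each $i=1,2$, grow the shape $u+\lambda\Gamma_{ji}$ by increasing $\lambda$ from $0$ until its boundary first hits some point $v\in\mathcal{P}\setminus\{u\}$; if $v$ lies on the (transformed) critical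 arc, add the edge $\overrightarrow{uv}$, otherwise add nothing. A graph $G$ with vertex set $\mathcal{P}$ (edges regarded as undirected with Euclidean lengths) is a geometric $t$-spanner if for all $u,v\in\mathcal{P}$ the shortest $u$-$v$ path in $G$ has length at most $t|uv|$. *)

theory Defs
  imports "HOL-Analysis.Analysis"
begin

definition curved_trapezoid :: "real \<Rightarrow> complex set" where
  "curved_trapezoid \<theta> = {z. 0 < Re z \<and> Re z < 1 \<and> 0 < Im z \<and> Im z < sin \<theta>
      \<and> cmod z < 1 \<and> cmod (z - 1) < 1}"

definition critical_arc :: "real \<Rightarrow> complex set" where
  "critical_arc \<theta> = {cis \<phi> | \<phi>. 0 \<le> \<phi> \<and> \<phi> \<le> \<theta>}"

definition TY_angle :: "nat \<Rightarrow> real" where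
  "TY_angle k = real_of_int \<lceil>real k / 8\<rceil> * 2 * pi / real k"

text \<open>The map sending the base trapezoid to cone j,i: i = 1 is Rot (no reflection),
  i = 2 is Rot composed with reflection through the x-axis (complex conjugation).\<close>
definition cone_map :: "nat \<Rightarrow> nat \<Rightarrow> nat \<Rightarrow> complex \<Rightarrow> complex" where
  "cone_map k j i z = cis (2 * real j * pi / real k) * (if i = 1 then z else cnj z)"

definition grow :: "complex \<Rightarrow> real \<Rightarrow> complex set \<Rightarrow> complex set" where
  "grow u r S = (\<lambda>z. u + complex_of_real r * z) ` S"

definition hit_at :: "complex set \<Rightarrow> complex \<Rightarrow> complex set \<Rightarrow> complex \<Rightarrow> real \<Rightarrow> bool" where
  "hit_at P u S v r \<longleftrightarrow> v \<in> P \<and> v \<noteq> u \<and> 0 < r \<and> v \<in> frontier (grow u r S) \<and>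
     (\<forall>r'. 0 < r' \<and> r' < r \<longrightarrow> (\<forall>w \<in> P - {u}. w \<notin> closure (grow u r' S)))"

definition first_hit :: "complex set \<Rightarrow> complex \<Rightarrow> complex set \<Rightarrow> complex \<Rightarrow> bool" where
  "first_hit P u S v \<longleftrightarrow> (\<exists>r. hit_at P u S v r)"

definition valid_selection ::
  "nat \<Rightarrow> complex set \<Rightarrow> (complex \<Rightarrow> nat \<Rightarrow> nat \<Rightarrow> complex) \<Rightarrow> bool" where
  "valid_selection k P sel \<longleftrightarrow>
     (\<forall>u\<in>P. \<forall>j<k. \<forall>i\<in>{1,2}.
        (\<exists>v. first_hit P u (cone_map k j i ` curved_trapezoid (TY_angle k)) v) \<longrightarrow>
        first_hit P u (cone_map k j i ` curved_trapezoid (TY_angle k)) (sel u j i))"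

definition TY_edges ::
  "nat \<Rightarrow> complex set \<Rightarrow> (complex \<Rightarrow> nat \<Rightarrow> nat \<Rightarrow> complex) \<Rightarrow> (complex \<times> complex) set" where
  "TY_edges k P sel = {(u, sel u j i) | u j i. u \<in> P \<and> j < k \<and> i \<in> {1,2} \<and>
     (\<exists>r. hit_at P u (cone_map k j i ` curved_trapezoid (TY_angle k)) (sel u j i) r \<and>
          sel u j i \<in> grow u r (cone_map k j i ` critical_arc (TY_angle k)))}"

definition path_length :: "complex list \<Rightarrow> real" where
  "path_length xs = (\<Sum>i < length xs - 1. dist (xs ! i) (xs ! Suc i))"

definition geometric_spanner :: "complex set \<Rightarrow> (complex \<times> complex) set \<Rightarrow> real \<Rightarrow> bool" where
  "geometric_spanner P E t \<longleftrightarrow>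
     (\<forall>u\<in>P. \<forall>v\<in>P. \<exists>xs. xs \<noteq> [] \<and> hd xs = u \<and> last xs = v \<and>
        (\<forall>i. Suc i < length xs \<longrightarrow> (xs ! i, xs ! Suc i) \<in> E \<or> (xs ! Suc i, xs ! i) \<in> E) \<and>
        path_length xs \<le> t * dist u v)"

definition tau :: "nat \<Rightarrow> real" where
  "tau k = 1 / (1 - 2 * sin (pi / real k + pi / 8))"

end

theory Submission
  imports Defs
begin

text \<open>Fix \<open>u \<noteq> v\<close> and put \<open>\<delta> = 2\<pi>/k\<close>. Among the sectors at \<open>u\<close> of aperture
  \<open>L = \<lceil>k/4\<rceil>\<delta> \<in> [\<pi>/2, 2\<theta>]\<close> (\<open>\<theta>\<close> the trapezoid angle) starting at a multiple of \<open>\<delta>\<close>, pick one containing \<open>v\<close> such that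
  every direction in it is within \<open>D = \<pi>/4 + \<delta>\<close> of the direction of \<open>v - u\<close>. The sector is the union
  of the angular ranges of two cones, one of them reflected, and since \<open>L \<le> 2\<theta>\<close> the point \<open>m\<close> of
  \<open>P\<close> nearest to \<open>u\<close> in the sector lies on the critical arc of one of them at scale \<open>|um|\<close>.
  That cone is therefore first hit at scale \<open>|um|\<close>, and the selected hit point \<open>b\<close> is again on
  the critical arc: \<open>ub\<close> is an edge with \<open>|ub| = |um| \<le> |uv|\<close> and \<open>\<angle>buv \<le> D\<close>. The law of
  cosines then gives \<open>|bv| \<le> |uv| - (1 - 2 sin (D/2)) |ub|\<close>, and routing greedily along such edges
  produces a path of length at most \<open>|uv| / (1 - 2 sin (\<pi>/k + \<pi>/8))\<close>.\<close>

lemma TY_angle_bounds: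
  assumes "k > 24"
  shows "pi/4 \<le> TY_angle k" "TY_angle k < pi/3"
proof -
  define m where "m = \<lceil>real k / 8\<rceil>"
  have k: "real k \<ge> 25" using assms by simp
  have m: "real k / 8 \<le> m" "m < real k / 8 + 1" unfolding m_def by linarith+
  have \<theta>: "TY_angle k = pi * (2 * m / real k)" unfolding TY_angle_def m_def by simp
  show "pi/4 \<le> TY_angle k" unfolding \<theta> using k m by (simp add: field_simps)
  show "TY_angle k < pi/3" unfolding \<theta> using k m by (simp add: field_simps)
qed

lemma grid_sector_bounds:
  assumes "k > 24"
  defines "\<delta> \<equiv> 2 * pi / real k" and "L \<equiv> of_int \<lceil>real k / 4\<rceil> * (2 * pi / real k)"
  shows "pi/2 \<le> L" "L \<le> 2 * TY_angle k" "pi/4 + \<delta> \<le> L" "L + \<delta> \<le> 2 * (pi/4 + \<delta>)"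
proof -
  define n where "n = \<lceil>real k / 4\<rceil>"
  define m where "m = \<lceil>real k / 8\<rceil>"
  have k: "real k \<ge> 25" using assms by simp
  have n: "real k / 4 \<le> n" "n < real k / 4 + 1" unfolding n_def by linarith+
  have "n \<le> 2 * m" unfolding n_def m_def by linarith
  have L: "L = pi * (2 * n / real k)" and \<theta>: "TY_angle k = pi * (2 * m / real k)"
    unfolding L_def n_def TY_angle_def m_def by simp_all
  have \<delta>: "\<delta> = pi * (2 / real k)" unfolding \<delta>_def by simp
  show "pi/2 \<le> L" unfolding L using k n by (simp add: field_simps)
  show "L \<le> 2 * TY_angle k" unfolding L \<theta> using k \<open>n \<le> 2 * m\<close> by (simp add: field_simps)
  have "1/4 + 2 / real k \<le> 1/2" "1/2 \<le> 2 * n / real k" using k n by (simp_all add: field_simps)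
  then have "1/4 + 2 / real k \<le> 2 * n / real k" by linarith
  from mult_left_mono[OF this pi_ge_zero] show "pi/4 + \<delta> \<le> L"
    unfolding L \<delta> by (simp add: algebra_simps)
  have "2 * n / real k \<le> 1/2 + 2 / real k" using k n by (simp add: field_simps)
  from mult_left_mono[OF this pi_ge_zero] show "L + \<delta> \<le> 2 * (pi/4 + \<delta>)"
    unfolding L \<delta> by (simp add: algebra_simps)
qed

lemma TY_stretch_lt_one:
  fixes k :: nat
  assumes "k > 24"
  shows "2 * sin (pi / k + pi / 8) < 1"
proof -
  define a where "a = pi / k + pi / 8"
  have "real k \<ge> 25" using assms by simp
  then have "0 \<le> a" "a < pi / 6" unfolding a_def by (simp_all add: field_simps)
  then have "sin a < sin (pi / 6)" using pi_gt_zero by (intro sin_monotone_2pi) linarith+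
  then show ?thesis unfolding a_def by (simp add: sin_30)
qed

lemma cis_grid_angle_mod:
  assumes "0 < k"
  shows "cis (2 * real (nat (J mod int k)) * pi / real k) = cis (of_int J * (2 * pi / real k))"
proof -
  have "of_int J = of_int (J mod int k) + real k * (of_int (J div int k) :: real)"
    by (metis mod_mult_div_eq of_int_add of_int_mult of_int_of_nat_eq)
  then have angle: "2 * real (nat (J mod int k)) * pi / real k
      = of_int J * (2 * pi / real k) + 2 * pi * of_int (- (J div int k))"
    using assms by (simp add: field_simps)
  have "cis (2 * pi * of_int (- (J div int k))) = 1" by (rule cis_multiple_2pi) simp
  then show ?thesis unfolding angle cis_mult[symmetric] by simp
qed

lemma exists_grid_point:
  fixes x \<delta> :: real
  assumes "0 < \<delta>"
  obtains J :: int where "x \<le> of_int J * \<delta>" "of_int J * \<delta> < x + \<delta>"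
proof
  show "x \<le> of_int \<lceil>x / \<delta>\<rceil> * \<delta>"
    using mult_right_mono[OF le_of_int_ceiling[of "x / \<delta>"], of \<delta>] assms by simp
  have "of_int \<lceil>x / \<delta>\<rceil> < x / \<delta> + 1" by linarith
  then show "of_int \<lceil>x / \<delta>\<rceil> * \<delta> < x + \<delta>" using assms by (simp add: field_simps)
qed

definition closed_trapezoid :: "real \<Rightarrow> complex set" where
  "closed_trapezoid \<theta> = {z. 0 \<le> Re z \<and> Re z \<le> 1 \<and> 0 \<le> Im z \<and> Im z \<le> sin \<theta>
      \<and> cmod z \<le> 1 \<and> cmod (z - 1) \<le> 1}"

lemma closure_curved_trapezoid:
  assumes "0 < sin \<theta>"
  shows "closure (curved_trapezoid \<theta>) = closed_trapezoid \<theta>"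
proof -
  \<comment> \<open>Half-planes are written with inner products so that the library's halfspace lemmas apply.\<close>
  define F where "F = {{z. 1 \<bullet> z > 0}, {z. 1 \<bullet> z < 1}, {z. \<i> \<bullet> z > 0}, {z. \<i> \<bullet> z < sin \<theta>},
    ball 0 1, ball (1::complex) 1}"
  have T: "curved_trapezoid \<theta> = \<Inter>F"
    unfolding F_def curved_trapezoid_def by (auto simp: dist_norm norm_minus_commute)
  have "Complex (1/2) (sin \<theta> / 2) \<in> curved_trapezoid \<theta>"
    using assms mult_le_one[OF sin_le_one _ sin_le_one, of \<theta> \<theta>] unfolding curved_trapezoid_def
    by (auto simp: cmod_def power2_eq_square real_sqrt_less_iff)
  then have "closure (\<Inter>F) = \<Inter>(closure ` F)"
    unfolding T by (subst closure_Inter_convex_open)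
      (auto simp: F_def convex_halfspace_gt convex_halfspace_lt open_halfspace_gt open_halfspace_lt
        simp del: complex_inner_1 complex_inner_i_left)
  also have "\<dots> = closed_trapezoid \<theta>"
    unfolding F_def closed_trapezoid_def
    by (simp del: complex_inner_1 complex_inner_i_left) (auto simp: dist_norm norm_minus_commute)
  finally show ?thesis unfolding T .
qed

lemma first_quadrant_polar:
  assumes "0 \<le> Re z" "0 \<le> Im z"
  obtains \<psi> where "0 \<le> \<psi>" "\<psi> \<le> pi/2" "z = of_real (cmod z) * cis \<psi>"
proof
  show "0 \<le> Arg z" "Arg z \<le> pi/2" using assms Arg_less_0[of z] Arg_Re_nonneg[of z] by auto
  show "z = of_real (cmod z) * cis (Arg z)" using rcis_cmod_Arg[of z] by (simp add: rcis_def)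
qed

lemma unit_closed_trapezoid_subset_critical_arc:
  assumes "z \<in> closed_trapezoid \<theta>" "cmod z = 1" "0 \<le> \<theta>" "\<theta> \<le> pi/2"
  shows "z \<in> critical_arc \<theta>"
proof -
  obtain \<psi> where \<psi>: "0 \<le> \<psi>" "\<psi> \<le> pi/2" "z = of_real (cmod z) * cis \<psi>"
    using assms(1) first_quadrant_polar unfolding closed_trapezoid_def by blast
  then have z: "z = cis \<psi>" using assms(2) by simp
  have "sin \<psi> \<le> sin \<theta>" using assms(1) unfolding closed_trapezoid_def z by simp
  then have "\<psi> \<le> \<theta>" using sin_mono_le_eq[of \<psi> \<theta>] \<psi> assms by simp
  then show ?thesis unfolding critical_arc_def z using \<psi> by auto
qed

lemma critical_arc_subset_closed_trapezoid:
  assumes "\<theta> \<le> pi/3"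
  shows "critical_arc \<theta> \<subseteq> closed_trapezoid \<theta>"
proof
  fix z assume "z \<in> critical_arc \<theta>"
  then obtain \<phi> where \<phi>: "0 \<le> \<phi>" "\<phi> \<le> \<theta>" "z = cis \<phi>" unfolding critical_arc_def by blast
  have "0 \<le> cos \<phi>" "0 \<le> sin \<phi>" using \<phi> assms by (auto intro!: cos_ge_zero sin_ge_zero)
  moreover have "sin \<phi> \<le> sin \<theta>" using sin_mono_le_eq[of \<phi> \<theta>] \<phi> assms by simp
  moreover have "cos (pi/3) \<le> cos \<phi>" using cos_mono_le_eq[of "pi/3" \<phi>] \<phi> assms by simp
  then have "(cmod (cis \<phi> - 1))\<^sup>2 \<le> 1"
    unfolding cmod_power2 by (simp add: power2_eq_square algebra_simps cos_60)
  then have "cmod (cis \<phi> - 1) \<le> 1" by (simp add: power_le_one_iff)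
  ultimately show "z \<in> closed_trapezoid \<theta>" unfolding closed_trapezoid_def \<phi>(3) by auto
qed

definition in_sector :: "real \<Rightarrow> real \<Rightarrow> complex \<Rightarrow> bool" where
  "in_sector \<gamma> L w \<longleftrightarrow> (\<exists>\<psi>. 0 \<le> \<psi> \<and> \<psi> \<le> L \<and> w = of_real (cmod w) * cis (\<gamma> + \<psi>))"

lemma in_sector_rotate:
  assumes "0 \<le> Re z" "0 \<le> Im z" "0 \<le> t" "pi/2 \<le> L"
  shows "in_sector a L (of_real t * (cis a * z))"
proof -
  obtain \<psi> where \<psi>: "0 \<le> \<psi>" "\<psi> \<le> pi/2" "z = of_real (cmod z) * cis \<psi>"
    using first_quadrant_polar assms(1,2) by blast
  have "of_real t * (cis a * z) = of_real (cmod (of_real t * (cis a * z))) * cis (a + \<psi>)"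
    using assms(3) by (subst \<psi>(3)) (simp add: norm_mult cis_mult[symmetric])
  then show ?thesis unfolding in_sector_def using \<psi> assms(4) by (intro exI[of _ \<psi>]) auto
qed

lemma in_sector_rotate_cnj:
  assumes "0 \<le> Re z" "0 \<le> Im z" "0 \<le> t" "pi/2 \<le> L"
  shows "in_sector (a - L) L (of_real t * (cis a * cnj z))"
proof -
  obtain \<psi> where \<psi>: "0 \<le> \<psi>" "\<psi> \<le> pi/2" "z = of_real (cmod z) * cis \<psi>"
    using first_quadrant_polar assms(1,2) by blast
  have "cnj z = of_real (cmod z) * cis (- \<psi>)" by (subst \<psi>(3)) (simp add: cis_cnj)
  then have "of_real t * (cis a * cnj z)
      = of_real (cmod (of_real t * (cis a * cnj z))) * cis ((a - L) + (L - \<psi>))"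
    using assms(3) by (simp add: norm_mult cis_mult)
  then show ?thesis unfolding in_sector_def using \<psi> assms(4) by (intro exI[of _ "L - \<psi>"]) auto
qed

lemma in_sector_Re_mult_cnj_ge:
  assumes "in_sector \<gamma> L b" "w = of_real (cmod w) * cis (\<gamma> + \<psi>)" "L - D \<le> \<psi>" "\<psi> \<le> D" "D \<le> pi"
  shows "cmod b * cmod w * cos D \<le> Re (b * cnj w)"
proof -
  obtain \<psi>b where \<psi>b: "0 \<le> \<psi>b" "\<psi>b \<le> L" "b = of_real (cmod b) * cis (\<gamma> + \<psi>b)"
    using assms(1) unfolding in_sector_def by blast
  have "b * cnj w = of_real (cmod b * cmod w) * cis (\<psi>b - \<psi>)"
    by (subst \<psi>b(3), subst assms(2)) (simp add: cis_cnj cis_mult)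
  then have "Re (b * cnj w) = cmod b * cmod w * cos \<bar>\<psi>b - \<psi>\<bar>" by simp
  moreover have "cos D \<le> cos \<bar>\<psi>b - \<psi>\<bar>" using cos_mono_le_eq[of D "\<bar>\<psi>b - \<psi>\<bar>"] \<psi>b assms by auto
  ultimately show ?thesis by (simp add: mult_left_mono)
qed

text \<open>With \<open>c = 2 sin (D/2)\<close> we have \<open>cos D = 1 - c\<^sup>2/2\<close>, and the law of cosines reduces the
  claim to \<open>c (2 - c) |b| (|w| - |b|) \<ge> 0\<close>.\<close>
lemma norm_diff_le_of_small_angle:
  fixes b w :: complex
  assumes "cmod b \<le> cmod w" "cmod b * cmod w * cos D \<le> Re (b * cnj w)" "0 \<le> D" "D \<le> pi"
  shows "cmod (b - w) \<le> cmod w - (1 - 2 * sin (D/2)) * cmod b"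
proof -
  define c where "c = 2 * sin (D/2)"
  define s where "s = cmod b"
  define V where "V = cmod w"
  have c: "0 \<le> c" "c \<le> 2" using assms(3,4) unfolding c_def by (auto intro: sin_ge_zero)
  have "cos D = 1 - c\<^sup>2/2" using cos_double_sin[of "D/2"] unfolding c_def by (simp add: power2_eq_square)
  have "(cmod (b - w))\<^sup>2 = s\<^sup>2 + V\<^sup>2 - 2 * Re (b * cnj w)"
    unfolding s_def V_def cmod_power2 by (simp add: power2_eq_square algebra_simps)
  also have "\<dots> \<le> s\<^sup>2 + V\<^sup>2 - 2 * (s * V * (1 - c\<^sup>2/2))"
    using assms(2) \<open>cos D = 1 - c\<^sup>2/2\<close> unfolding s_def V_def by simp
  also have "\<dots> = (V - (1 - c) * s)\<^sup>2 - c * (2 - c) * s * (V - s)"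
    by (simp add: power2_eq_square algebra_simps)
  also have "\<dots> \<le> (V - (1 - c) * s)\<^sup>2"
    using assms(1) c unfolding s_def V_def by simp
  finally have "(cmod (b - w))\<^sup>2 \<le> (V - (1 - c) * s)\<^sup>2" .
  moreover have "0 \<le> V - (1 - c) * s"
    using assms(1) c mult_right_mono[of "1 - c" 1 s] unfolding s_def V_def by (cases "c \<le> 1") auto
  ultimately show ?thesis unfolding s_def V_def c_def by (rule power2_le_imp_le)
qed

lemma norm_cone_map [simp]: "cmod (cone_map k j i z) = cmod z"
  unfolding cone_map_def by (simp add: norm_mult)

lemma closure_grow_cone:
  assumes "0 < r" "0 < sin \<theta>"
  shows "closure (grow u r (cone_map k j i ` curved_trapezoid \<theta>))
    = grow u r (cone_map k j i ` closed_trapezoid \<theta>)"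
proof -
  define f where "f z = of_real r * cone_map k j i z" for z
  have "linear f"
    by (rule linearI) (auto simp: f_def cone_map_def scaleR_conv_of_real algebra_simps)
  moreover have "inj f"
    using assms(1) by (intro injI) (auto simp: f_def cone_map_def split: if_splits)
  ultimately have "closure (f ` curved_trapezoid \<theta>) = f ` closed_trapezoid \<theta>"
    using closure_injective_linear_image closure_curved_trapezoid[OF assms(2)] by metis
  moreover have "grow u r (cone_map k j i ` A) = (+) u ` (f ` A)" for A
    unfolding grow_def f_def by (auto simp: image_image)
  ultimately show ?thesis by (simp add: closure_translation)
qed

lemma mem_closure_grow_cone:
  assumes "0 < r" "0 < sin \<theta>"
  shows "w \<in> closure (grow u r (cone_map k j i ` curved_trapezoid \<theta>))
    \<longleftrightarrow> (\<exists>z\<in>closed_trapezoid \<theta>. w = u + of_real r * cone_map k j i z)"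
  by (simp add: closure_grow_cone[OF assms]) (auto simp: grow_def)

lemma hit_at_same_scale:
  assumes "hit_at P u S v r" "hit_at P u S w s"
  shows "r = s"
proof -
  have "w \<in> closure (grow u s S)" "v \<in> closure (grow u r S)"
    using assms unfolding hit_at_def frontier_def by blast+
  then show ?thesis using assms unfolding hit_at_def by (meson DiffI linorder_neqE singletonD)
qed

lemma hit_at_nearest_on_critical_arc:
  assumes \<theta>: "0 < \<theta>" "\<theta> \<le> pi/3"
    and cone: "\<And>z t. z \<in> closed_trapezoid \<theta> \<Longrightarrow> 0 < t \<Longrightarrow> in_sector \<gamma> L (of_real t * cone_map k j i z)"
    and m: "m \<in> P" "m \<noteq> u" "\<zeta> \<in> critical_arc \<theta>" "m = u + of_real (cmod (m - u)) * cone_map k j i \<zeta>"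
    and nearest: "\<And>p. p \<in> P \<Longrightarrow> p \<noteq> u \<Longrightarrow> in_sector \<gamma> L (p - u) \<Longrightarrow> cmod (m - u) \<le> cmod (p - u)"
  shows "hit_at P u (cone_map k j i ` curved_trapezoid \<theta>) m (cmod (m - u))"
proof -
  define S where "S = cone_map k j i ` curved_trapezoid \<theta>"
  define r where "r = cmod (m - u)"
  have "0 < r" using m(2) unfolding r_def by simp
  have "0 < sin \<theta>" using \<theta> by (intro sin_gt_zero) auto
  have "\<zeta> \<in> closed_trapezoid \<theta>" using m(3) critical_arc_subset_closed_trapezoid \<theta>(2) by blast
  then have "m \<in> closure (grow u r S)"
    unfolding S_def mem_closure_grow_cone[OF \<open>0 < r\<close> \<open>0 < sin \<theta>\<close>]
    using m(4) unfolding r_def by blast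
  moreover have "m \<notin> grow u r S"
  proof
    assume "m \<in> grow u r S"
    then obtain z where "z \<in> curved_trapezoid \<theta>" "m = u + of_real r * cone_map k j i z"
      unfolding S_def grow_def by auto
    then have "cmod (m - u) < r" using \<open>0 < r\<close> by (simp add: norm_mult curved_trapezoid_def)
    then show False unfolding r_def by simp
  qed
  moreover have "w \<notin> closure (grow u s S)" if "0 < s" "s < r" "w \<in> P - {u}" for s w
  proof
    assume "w \<in> closure (grow u s S)"
    then obtain z where z: "z \<in> closed_trapezoid \<theta>" "w = u + of_real s * cone_map k j i z"
      unfolding S_def mem_closure_grow_cone[OF \<open>0 < s\<close> \<open>0 < sin \<theta>\<close>] by blast
    then have "cmod (w - u) \<le> s"
      using \<open>0 < s\<close> by (simp add: norm_mult mult_left_le closed_trapezoid_def)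
    moreover have "in_sector \<gamma> L (w - u)" using cone z that by simp
    ultimately show False using nearest[of w] that unfolding r_def by auto
  qed
  ultimately show ?thesis
    using m \<open>0 < r\<close> interior_subset unfolding hit_at_def frontier_def S_def r_def by blast
qed

lemma TY_edge_of_nearest_on_critical_arc:
  assumes sel: "valid_selection k P sel" and u: "u \<in> P" and j: "j < k" and i: "i \<in> {1,2}"
    and \<theta>: "0 < TY_angle k" "TY_angle k \<le> pi/3"
    and cone: "\<And>z t. z \<in> closed_trapezoid (TY_angle k) \<Longrightarrow> 0 < t \<Longrightarrow>
      in_sector \<gamma> L (of_real t * cone_map k j i z)"
    and m: "m \<in> P" "m \<noteq> u" "\<zeta> \<in> critical_arc (TY_angle k)"
      "m = u + of_real (cmod (m - u)) * cone_map k j i \<zeta>"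
    and nearest: "\<And>p. p \<in> P \<Longrightarrow> p \<noteq> u \<Longrightarrow> in_sector \<gamma> L (p - u) \<Longrightarrow> cmod (m - u) \<le> cmod (p - u)"
  shows "\<exists>b\<in>P. (u, b) \<in> TY_edges k P sel \<and> in_sector \<gamma> L (b - u) \<and> cmod (b - u) = cmod (m - u)"
proof -
  define \<theta> where "\<theta> = TY_angle k"
  define S where "S = cone_map k j i ` curved_trapezoid \<theta>"
  define r where "r = cmod (m - u)"
  define b where "b = sel u j i"
  have "hit_at P u S m r"
    using hit_at_nearest_on_critical_arc[OF \<theta> cone m nearest] unfolding S_def r_def \<theta>_def .
  then have "first_hit P u S b"
    using sel u j i unfolding valid_selection_def first_hit_def S_def \<theta>_def b_def by blast
  then obtain s where hit: "hit_at P u S b s" unfolding first_hit_def by blast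
  then have "s = r" using hit_at_same_scale \<open>hit_at P u S m r\<close> by blast
  have "0 < r" "0 < sin \<theta>" using hit \<open>s = r\<close> \<theta> unfolding hit_at_def \<theta>_def by (auto intro: sin_gt_zero)
  have b: "b \<in> P" "b \<noteq> u" "b \<in> closure (grow u r S)"
    using hit \<open>s = r\<close> unfolding hit_at_def frontier_def by auto
  then obtain z where z: "z \<in> closed_trapezoid \<theta>" "b = u + of_real r * cone_map k j i z"
    unfolding S_def mem_closure_grow_cone[OF \<open>0 < r\<close> \<open>0 < sin \<theta>\<close>] by blast
  have "in_sector \<gamma> L (b - u)" using cone z \<open>0 < r\<close> unfolding \<theta>_def by simp
  then have "r \<le> cmod (b - u)" using nearest b unfolding r_def by blast
  moreover have "cmod (b - u) = r * cmod z" using z(2) \<open>0 < r\<close> by (simp add: norm_mult)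
  moreover have "cmod z \<le> 1" using z(1) unfolding closed_trapezoid_def by simp
  ultimately have "cmod z = 1" "cmod (b - u) = r" using \<open>0 < r\<close> by (simp_all add: mult_le_cancel_left1)
  then have "z \<in> critical_arc \<theta>"
    using unit_closed_trapezoid_subset_critical_arc z(1) \<theta> unfolding \<theta>_def by simp
  then have "b \<in> grow u r (cone_map k j i ` critical_arc \<theta>)" unfolding grow_def using z(2) by auto
  then have "(u, b) \<in> TY_edges k P sel"
    unfolding TY_edges_def using u j i hit \<open>s = r\<close> unfolding b_def S_def \<theta>_def by blast
  then show ?thesis
    using b \<open>in_sector \<gamma> L (b - u)\<close> \<open>cmod (b - u) = r\<close> unfolding r_def by blast
qed

lemma TY_edge_in_grid_sector:
  assumes k: "k > 24" and sel: "valid_selection k P sel" and u: "u \<in> P"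
    and L: "L = of_int \<lceil>real k / 4\<rceil> * (2 * pi / real k)" and \<gamma>: "\<gamma> = of_int J * (2 * pi / real k)"
    and m: "m \<in> P" "m \<noteq> u" "in_sector \<gamma> L (m - u)"
    and nearest: "\<And>p. p \<in> P \<Longrightarrow> p \<noteq> u \<Longrightarrow> in_sector \<gamma> L (p - u) \<Longrightarrow> cmod (m - u) \<le> cmod (p - u)"
  shows "\<exists>b\<in>P. (u, b) \<in> TY_edges k P sel \<and> in_sector \<gamma> L (b - u) \<and> cmod (b - u) = cmod (m - u)"
proof -
  define \<theta> where "\<theta> = TY_angle k"
  have \<theta>: "0 < TY_angle k" "TY_angle k \<le> pi/3" using TY_angle_bounds[OF k] pi_gt_zero by linarith+
  have "pi/2 \<le> L" "L \<le> 2 * \<theta>" using grid_sector_bounds[OF k] unfolding L \<theta>_def by auto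
  define j1 where "j1 = nat (J mod int k)"
  define j2 where "j2 = nat ((J + \<lceil>real k / 4\<rceil>) mod int k)"
  have j: "j1 < k" "j2 < k" using k unfolding j1_def j2_def by (simp_all add: nat_less_iff)
  have "cis (2 * real j1 * pi / real k) = cis \<gamma>"
    unfolding j1_def \<gamma> using k by (intro cis_grid_angle_mod) simp
  then have cone1: "in_sector \<gamma> L (of_real t * cone_map k j1 1 z)"
    if "z \<in> closed_trapezoid \<theta>" "0 < t" for z t
    using in_sector_rotate[of z t L \<gamma>] that \<open>pi/2 \<le> L\<close> unfolding cone_map_def closed_trapezoid_def by simp
  have "cis (2 * real j2 * pi / real k) = cis (\<gamma> + L)"
    using cis_grid_angle_mod[of k "J + \<lceil>real k / 4\<rceil>"] k unfolding j2_def \<gamma> L by (simp add: algebra_simps)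
  then have cone2: "in_sector \<gamma> L (of_real t * cone_map k j2 2 z)"
    if "z \<in> closed_trapezoid \<theta>" "0 < t" for z t
    using in_sector_rotate_cnj[of z t L "\<gamma> + L"] that \<open>pi/2 \<le> L\<close> unfolding cone_map_def closed_trapezoid_def by simp
  obtain \<psi> where \<psi>: "0 \<le> \<psi>" "\<psi> \<le> L" "m - u = of_real (cmod (m - u)) * cis (\<gamma> + \<psi>)"
    using m(3) unfolding in_sector_def by blast
  \<comment> \<open>Since \<open>L \<le> 2\<theta>\<close>, the direction of \<open>m\<close> is within \<open>\<theta>\<close> of \<open>\<gamma>\<close> (critical arc of cone \<open>j1\<close>)
    or of \<open>\<gamma> + L\<close> (critical arc of the reflected cone \<open>j2\<close>).\<close>
  show ?thesis
  proof (cases "\<psi> \<le> \<theta>")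
    case True
    then have "cis \<psi> \<in> critical_arc \<theta>" unfolding critical_arc_def using \<psi>(1) by auto
    moreover have "m = u + of_real (cmod (m - u)) * cone_map k j1 1 (cis \<psi>)"
      unfolding cone_map_def \<open>cis (2 * real j1 * pi / real k) = cis \<gamma>\<close> using \<psi>(3) by (simp add: cis_mult algebra_simps)
    ultimately show ?thesis
      using TY_edge_of_nearest_on_critical_arc[OF sel u j(1) _ \<theta> cone1 m(1,2) _ _ nearest] unfolding \<theta>_def by simp
  next
    case False
    then have "cis (L - \<psi>) \<in> critical_arc \<theta>"
      unfolding critical_arc_def using \<psi>(2) \<open>L \<le> 2 * \<theta>\<close> by auto
    moreover have "m = u + of_real (cmod (m - u)) * cone_map k j2 2 (cis (L - \<psi>))"
      unfolding cone_map_def \<open>cis (2 * real j2 * pi / real k) = cis (\<gamma> + L)\<close> using \<psi>(3)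
      by (simp add: cis_mult cis_cnj algebra_simps)
    ultimately show ?thesis
      using TY_edge_of_nearest_on_critical_arc[OF sel u j(2) _ \<theta> cone2 m(1,2) _ _ nearest] unfolding \<theta>_def by simp
  qed
qed

lemma TY_edge_towards:
  assumes k: "k > 24" and sel: "valid_selection k P sel" and fin: "finite P"
    and u: "u \<in> P" and v: "v \<in> P" and "u \<noteq> v"
  shows "\<exists>b\<in>P. (u, b) \<in> TY_edges k P sel \<and> b \<noteq> u \<and>
    dist b v \<le> dist u v - (1 - 2 * sin (pi / real k + pi / 8)) * dist u b"
proof -
  define \<delta> where "\<delta> = 2 * pi / real k"
  define D where "D = pi/4 + \<delta>"
  define L where "L = of_int \<lceil>real k / 4\<rceil> * (2 * pi / real k)"
  have L: "D \<le> L" "L + \<delta> \<le> 2 * D" "L < pi"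
    using grid_sector_bounds[OF k] TY_angle_bounds[OF k] unfolding D_def L_def \<delta>_def by auto
  have "0 < \<delta>" using k unfolding \<delta>_def by simp
  then obtain J :: int where J: "Arg (v - u) - D \<le> of_int J * \<delta>" "of_int J * \<delta> < Arg (v - u) - D + \<delta>"
    by (rule exists_grid_point)
  \<comment> \<open>Then \<open>v - u\<close> has direction \<open>\<gamma> + \<psi>\<close> with \<open>\<psi> \<in> [L - D, D]\<close>, so every direction of the
    sector \<open>[\<gamma>, \<gamma> + L]\<close> is within \<open>D\<close> of it.\<close>
  define \<gamma> where "\<gamma> = of_int J * \<delta>"
  define \<psi> where "\<psi> = Arg (v - u) - \<gamma>"
  have \<psi>: "L - D \<le> \<psi>" "\<psi> \<le> D" using J L unfolding \<psi>_def \<gamma>_def by linarith+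
  have v_polar: "v - u = of_real (cmod (v - u)) * cis (\<gamma> + \<psi>)"
    using rcis_cmod_Arg[of "v - u"] unfolding \<psi>_def by (simp add: rcis_def)
  define Ps where "Ps = {p \<in> P. p \<noteq> u \<and> in_sector \<gamma> L (p - u)}"
  define m where "m = arg_min_on (\<lambda>p. cmod (p - u)) Ps"
  have "in_sector \<gamma> L (v - u)" unfolding in_sector_def using v_polar \<psi> L by (intro exI[of _ \<psi>]) auto
  then have "finite Ps" "v \<in> Ps" using fin v \<open>u \<noteq> v\<close> unfolding Ps_def by auto
  then have "m \<in> Ps" and nearest: "\<And>p. p \<in> Ps \<Longrightarrow> cmod (m - u) \<le> cmod (p - u)"
    unfolding m_def by (auto intro: arg_min_if_finite(1) arg_min_least)
  then obtain b where b: "b \<in> P" "(u, b) \<in> TY_edges k P sel" "in_sector \<gamma> L (b - u)"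
    "cmod (b - u) = cmod (m - u)"
    using TY_edge_in_grid_sector[OF k sel u L_def \<gamma>_def[unfolded \<delta>_def], of m] unfolding Ps_def by blast
  have "cmod (b - u) \<le> cmod (v - u)" using b(4) nearest \<open>v \<in> Ps\<close> by simp
  moreover have "cmod (b - u) * cmod (v - u) * cos D \<le> Re ((b - u) * cnj (v - u))"
    using in_sector_Re_mult_cnj_ge[OF b(3) v_polar \<psi>] L by simp
  ultimately have "cmod ((b - u) - (v - u)) \<le> cmod (v - u) - (1 - 2 * sin (D/2)) * cmod (b - u)"
    using L \<open>0 < \<delta>\<close> unfolding D_def by (intro norm_diff_le_of_small_angle) auto
  moreover have "D/2 = pi / real k + pi / 8" unfolding D_def \<delta>_def by simp
  moreover have "b \<noteq> u" using b(4) \<open>m \<in> Ps\<close> unfolding Ps_def by auto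
  ultimately show ?thesis using b(1,2) by (auto simp: dist_norm norm_minus_commute)
qed

definition is_walk :: "('a \<times> 'a) set \<Rightarrow> 'a list \<Rightarrow> bool" where
  "is_walk E xs \<longleftrightarrow> (\<forall>i. Suc i < length xs \<longrightarrow> (xs ! i, xs ! Suc i) \<in> E \<or> (xs ! Suc i, xs ! i) \<in> E)"

lemma is_walk_Cons:
  assumes "is_walk E xs" "xs \<noteq> []" "(u, hd xs) \<in> E"
  shows "is_walk E (u # xs)"
  unfolding is_walk_def
proof (intro allI impI)
  fix i assume "Suc i < length (u # xs)"
  then show "((u # xs) ! i, (u # xs) ! Suc i) \<in> E \<or> ((u # xs) ! Suc i, (u # xs) ! i) \<in> E"
    using assms by (cases i) (auto simp: is_walk_def hd_conv_nth)
qed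

lemma path_length_Cons:
  assumes "xs \<noteq> []"
  shows "path_length (x # xs) = dist x (hd xs) + path_length xs"
proof -
  obtain y ys where xs: "xs = y # ys" using assms by (cases xs) auto
  show ?thesis unfolding path_length_def xs
    by (simp add: sum.lessThan_Suc_shift del: sum.lessThan_Suc)
qed

lemma geometric_spanner_of_greedy_edges:
  fixes P :: "complex set"
  assumes "finite P" "c < 1"
    and greedy: "\<And>u v. u \<in> P \<Longrightarrow> v \<in> P \<Longrightarrow> u \<noteq> v \<Longrightarrow>
      \<exists>b\<in>P. (u, b) \<in> E \<and> b \<noteq> u \<and> dist b v \<le> dist u v - (1 - c) * dist u b"
  shows "geometric_spanner P E (1 / (1 - c))"
proof -
  define t where "t = 1 / (1 - c)"
  have t: "0 \<le> t" "t * (1 - c) = 1" using assms(2) unfolding t_def by auto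
  define closer where "closer u v = card {q \<in> P \<times> P. dist (fst q) (snd q) < dist u v}" for u v :: complex
  have "\<exists>xs. xs \<noteq> [] \<and> hd xs = u \<and> last xs = v \<and> is_walk E xs \<and> path_length xs \<le> t * dist u v"
    if "u \<in> P" and v: "v \<in> P" for u v
    using \<open>u \<in> P\<close>
  proof (induction "closer u v" arbitrary: u rule: less_induct)
    case less
    show ?case
    proof (cases "u = v")
      case True
      then show ?thesis by (intro exI[of _ "[u]"]) (simp add: is_walk_def path_length_def)
    next
      case False
      then obtain b where b: "b \<in> P" "(u, b) \<in> E" "b \<noteq> u"
        and progress: "dist b v \<le> dist u v - (1 - c) * dist u b"
        using greedy less.prems v by blast
      have "dist b v < dist u v" using progress b(3) assms(2) by (smt (verit) mult_pos_pos zero_less_dist_iff)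
      then have "{q \<in> P \<times> P. dist (fst q) (snd q) < dist b v} \<subset> {q \<in> P \<times> P. dist (fst q) (snd q) < dist u v}"
        using b(1) v by force
      then have "closer b v < closer u v" unfolding closer_def using assms(1) by (intro psubset_card_mono) auto
      then obtain xs where xs: "xs \<noteq> []" "hd xs = b" "last xs = v" "is_walk E xs"
        "path_length xs \<le> t * dist b v"
        using less.hyps b(1) by blast
      have "path_length (u # xs) = dist u b + path_length xs" using path_length_Cons xs(1,2) by simp
      also have "\<dots> \<le> dist u b + t * (dist u v - (1 - c) * dist u b)"
        using xs(5) mult_left_mono[OF progress t(1)] by simp
      also have "\<dots> = t * dist u v" using t(2) by (simp add: right_diff_distrib mult.assoc[symmetric])
      finally show ?thesis using xs b(2) by (intro exI[of _ "u # xs"]) (auto intro: is_walk_Cons)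
    qed
  qed
  then show ?thesis unfolding geometric_spanner_def is_walk_def t_def by blast
qed

theorem lemma10:
  fixes k :: nat and P :: "complex set" and sel :: "complex \<Rightarrow> nat \<Rightarrow> nat \<Rightarrow> complex"
  assumes "k > 24" and "finite P" and "valid_selection k P sel"
  shows "geometric_spanner P (TY_edges k P sel) (tau k)"
  unfolding tau_def
  using assms(2) TY_stretch_lt_one[OF assms(1)]
  by (rule geometric_spanner_of_greedy_edges) (rule TY_edge_towards[OF assms(1,3,2)])

end
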